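(* Let $G=(V,E)$ be a connected graph with at least two nodes and let $P_{\mathrm{FSTAB}}(G)=\{\bm{x}\in\mathbb{R}^V: x_u+x_v\le 1 \text{ for all } uv\in E,\ \bm{x}\ge\bm{0}\}$, with circuits taken with respect to this linear description. Then $\mathcal{CD}(P_{\mathrm{FSTAB}}(G))=\mathcal{O}(\operatorname{diam}(G))$, i.e. there is an absolute constant $C$ (independent of $G$) with $\mathcal{CD}(P_{\mathrm{FSTAB}}(G))\le C\cdot \operatorname{diam}(G)$.
   Context: $\operatorname{diam}(G)=\max_{v\in V}\varepsilon(v)$, where the eccentricity $\varepsilon(v)$ is the maximum graph distance from $v$ to a node of $G$. Circuits: for a polytope $P=\{\bm{x}: A\bm{x}=\bm{b},\ B\bm{x}\le \bm{d}\}$ given by a fixed linear system, a nonzero vector $\bm{g}$ is a circuit of $P$ if $A\bm{g}=\bm{0}$ and $\operatorname{supp}(B\bm{g})$ is inclusion-minimal among the sets $\operatorname{supp}(B\bm{y})$ with $A\bm{y}=\bm{0}$, $\bm{y}\neq\bm{0}$. A point $\bm{x}''\in P$ is one circuit step from $\bm{x}'\in P$ if $\bm{x}''=\bm{x}'+\alpha\bm{c}$ for a circuit $\bm{c}$ and $\alpha>0$ maximal such that $\bm{x}'+\alpha\bm{c}\in P$. A circuit walk of length $l$ is a sequence $\bm{z}^0,\dots,\bm{z}^l$ in $P$ with each $\bm{z}^i$ one circuit step from $\bm{z}^{i-1}$; the circuit distance is the length of a shortest circuit walk from one point to another, and $\mathcal{CD}(P)$ is the maximum circuit distance over ordered pairs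 of vertices of $P$. *)

theory Defs
  imports Main "HOL-Library.Extended_Nat"
begin

definition graph :: "nat set \<Rightarrow> nat set set \<Rightarrow> bool" where
  "graph V E \<longleftrightarrow> finite V \<and> (\<forall>e\<in>E. e \<subseteq> V \<and> card e = 2)"

definition adj :: "nat set set \<Rightarrow> (nat \<times> nat) set" where
  "adj E = {(u, v). {u, v} \<in> E}"

definition connected_graph :: "nat set \<Rightarrow> nat set set \<Rightarrow> bool" where
  "connected_graph V E \<longleftrightarrow> (\<forall>u\<in>V. \<forall>v\<in>V. (u, v) \<in> (adj E)\<^sup>*)"

definition gdist :: "nat set set \<Rightarrow> nat \<Rightarrow> nat \<Rightarrow> nat" where
  "gdist E u v = (LEAST n. (u, v) \<in> (adj E) ^^ n)"

definition ecc :: "nat set \<Rightarrow> nat set set \<Rightarrow> nat \<Rightarrow> nat" where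
  "ecc V E v = Max ((\<lambda>u. gdist E v u) ` V)"

definition diam :: "nat set \<Rightarrow> nat set set \<Rightarrow> nat" where
  "diam V E = Max (ecc V E ` V)"

text \<open>Points of R^V are functions nat => real vanishing outside V.
  A system is a row index set R with linear row functionals B r and right-hand sides d r;
  there are no equality constraints (A is empty).\<close>

type_synonym vec = "nat \<Rightarrow> real"

definition supported_on :: "nat set \<Rightarrow> vec \<Rightarrow> bool" where
  "supported_on V x \<longleftrightarrow> (\<forall>v. v \<notin> V \<longrightarrow> x v = 0)"

definition polyh :: "nat set \<Rightarrow> 'r set \<Rightarrow> ('r \<Rightarrow> vec \<Rightarrow> real) \<Rightarrow> ('r \<Rightarrow> real) \<Rightarrow> vec set" where
  "polyh V R B d = {x. supported_on V x \<and> (\<forall>r\<in>R. B r x \<le> d r)}"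

definition suppB :: "'r set \<Rightarrow> ('r \<Rightarrow> vec \<Rightarrow> real) \<Rightarrow> vec \<Rightarrow> 'r set" where
  "suppB R B g = {r\<in>R. B r g \<noteq> 0}"

definition is_circuit :: "nat set \<Rightarrow> 'r set \<Rightarrow> ('r \<Rightarrow> vec \<Rightarrow> real) \<Rightarrow> vec \<Rightarrow> bool" where
  "is_circuit V R B g \<longleftrightarrow> supported_on V g \<and> g \<noteq> (\<lambda>_. 0) \<and>
     (\<forall>y. supported_on V y \<and> y \<noteq> (\<lambda>_. 0) \<and> suppB R B y \<subseteq> suppB R B g \<longrightarrow> suppB R B y = suppB R B g)"

definition circuit_step :: "nat set \<Rightarrow> 'r set \<Rightarrow> ('r \<Rightarrow> vec \<Rightarrow> real) \<Rightarrow> ('r \<Rightarrow> real) \<Rightarrow> vec \<Rightarrow> vec \<Rightarrow> bool" where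
  "circuit_step V R B d x x' \<longleftrightarrow> x \<in> polyh V R B d \<and>
     (\<exists>c \<alpha>. is_circuit V R B c \<and> \<alpha> > 0 \<and> x' = (\<lambda>v. x v + \<alpha> * c v) \<and> x' \<in> polyh V R B d \<and>
        (\<forall>\<beta>>\<alpha>. (\<lambda>v. x v + \<beta> * c v) \<notin> polyh V R B d))"

definition circuit_walk :: "nat set \<Rightarrow> 'r set \<Rightarrow> ('r \<Rightarrow> vec \<Rightarrow> real) \<Rightarrow> ('r \<Rightarrow> real) \<Rightarrow> (nat \<Rightarrow> vec) \<Rightarrow> nat \<Rightarrow> bool" where
  "circuit_walk V R B d z l \<longleftrightarrow> (\<forall>i\<le>l. z i \<in> polyh V R B d) \<and>
     (\<forall>i<l. circuit_step V R B d (z i) (z (Suc i)))"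

text \<open>circuit distance (infinity if no circuit walk exists)\<close>
definition circuit_dist :: "nat set \<Rightarrow> 'r set \<Rightarrow> ('r \<Rightarrow> vec \<Rightarrow> real) \<Rightarrow> ('r \<Rightarrow> real) \<Rightarrow> vec \<Rightarrow> vec \<Rightarrow> enat" where
  "circuit_dist V R B d x y =
     (INF l \<in> {l. \<exists>z. circuit_walk V R B d z l \<and> z 0 = x \<and> z l = y}. enat l)"

definition is_vertex :: "vec set \<Rightarrow> vec \<Rightarrow> bool" where
  "is_vertex P x \<longleftrightarrow> x \<in> P \<and>
     (\<forall>y\<in>P. \<forall>z\<in>P. \<forall>t::real. 0 < t \<and> t < 1 \<and> x = (\<lambda>v. t * y v + (1 - t) * z v) \<longrightarrow> y = z)"

definition circuit_diameter :: "nat set \<Rightarrow> 'r set \<Rightarrow> ('r \<Rightarrow> vec \<Rightarrow> real) \<Rightarrow> ('r \<Rightarrow> real) \<Rightarrow> enat" where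
  "circuit_diameter V R B d =
     (SUP p \<in> {p. is_vertex (polyh V R B d) (fst p) \<and> is_vertex (polyh V R B d) (snd p)}.
        circuit_dist V R B d (fst p) (snd p))"

datatype frow = EdgeRow "nat set" | NonnegRow nat

definition fstab_rows :: "nat set \<Rightarrow> nat set set \<Rightarrow> frow set" where
  "fstab_rows V E = EdgeRow ` E \<union> NonnegRow ` V"

fun fstab_B :: "frow \<Rightarrow> vec \<Rightarrow> real" where
  "fstab_B (EdgeRow e) x = sum x e"
| "fstab_B (NonnegRow v) x = - x v"

fun fstab_d :: "frow \<Rightarrow> real" where
  "fstab_d (EdgeRow e) = 1"
| "fstab_d (NonnegRow v) = 0"

definition CD_FSTAB :: "nat set \<Rightarrow> nat set set \<Rightarrow> enat" where
  "CD_FSTAB V E = circuit_diameter V (fstab_rows V E) fstab_B fstab_d"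

end

theory Submission
  imports Defs
begin

(* Root the graph at r and let N be the eccentricity of r, so N <= diam G.  A signing
   sigma in {-1,0,1}^V that alternates in sign along a tree towards r is a circuit of the
   description, and a maximal step along it can often be undone by a maximal step along
   -sigma.  Vertices of the polytope are half-integral, and 0/1 when no edge joins two
   vertices of the same breadth-first layer.  For c in {1/2, 1}, the alternating point of
   radius k takes the value c on the layers k, k-2, k-4, ... and 0 elsewhere.  From any
   vertex, one reversible step at the root and then one step per layer make x agree with
   the alternating point of growing radius on the ball of that radius.  The value c = 1 can
   only be blocked by a coordinate 1/2 or by an edge inside a layer, and then the walk
   restarts with c = 1/2 at radius 0; in a graph with such an edge, the alternating point for
   c = 1 and radius N is moreover shrunk layer by layer until an infeasible radius forces the
   same switch.  So all vertices reach one common point within 3N + 1 reversible steps, and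
   any two are joined by a circuit walk of length at most 2 (3N + 1) <= 8N. *)

section \<open>Circuit walks through a common point\<close>

definition rev_circuit_step ::
  "nat set \<Rightarrow> 'r set \<Rightarrow> ('r \<Rightarrow> vec \<Rightarrow> real) \<Rightarrow> ('r \<Rightarrow> real) \<Rightarrow> vec \<Rightarrow> vec \<Rightarrow> bool" where
  "rev_circuit_step V R B d x y \<longleftrightarrow> circuit_step V R B d x y \<and> circuit_step V R B d y x"

lemma relpow_swap_if_sym:
  assumes "sym S" and "(a, b) \<in> S ^^ n"
  shows "(b, a) \<in> S ^^ n"
  using assms(2)
proof (induction n arbitrary: b)
  case (Suc n)
  then obtain c where "(a, c) \<in> S ^^ n" "(c, b) \<in> S" by (meson relpow_Suc_E)
  then show ?case using Suc.IH assms(1) by (meson relpow_Suc_I2 symD)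
qed simp

lemma circuit_dist_le_relpow:
  assumes "x \<in> polyh V R B d"
    and "(x, y) \<in> {(a, b). rev_circuit_step V R B d a b} ^^ n"
  shows "circuit_dist V R B d x y \<le> enat n"
proof -
  obtain z where z: "z 0 = x" "z n = y" "\<forall>i<n. rev_circuit_step V R B d (z i) (z (Suc i))"
    using assms(2) unfolding relpow_fun_conv by auto
  have "z i \<in> polyh V R B d" if "i \<le> n" for i
    using that assms(1) z(1,3)
    by (cases i) (auto simp: rev_circuit_step_def circuit_step_def)
  then have "circuit_walk V R B d z n"
    using z(3) unfolding circuit_walk_def rev_circuit_step_def by auto
  then show ?thesis
    unfolding circuit_dist_def using z(1,2) by (auto intro!: INF_lower)
qed

lemma circuit_diameter_le_via_hub:
  assumes hub: "\<And>x. is_vertex (polyh V R B d) x \<Longrightarrow>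
      \<exists>m\<le>n. (x, h) \<in> {(a, b). rev_circuit_step V R B d a b} ^^ m"
  shows "circuit_diameter V R B d \<le> enat (2 * n)"
  unfolding circuit_diameter_def
proof (rule SUP_least)
  let ?S = "{(a, b). rev_circuit_step V R B d a b}"
  fix p assume "p \<in> {p. is_vertex (polyh V R B d) (fst p) \<and> is_vertex (polyh V R B d) (snd p)}"
  then have x: "is_vertex (polyh V R B d) (fst p)" and y: "is_vertex (polyh V R B d) (snd p)"
    by auto
  obtain m1 where m1: "m1 \<le> n" "(fst p, h) \<in> ?S ^^ m1" using hub[OF x] by blast
  obtain m2 where m2: "m2 \<le> n" "(snd p, h) \<in> ?S ^^ m2" using hub[OF y] by blast
  have "sym ?S" by (auto intro: symI simp: rev_circuit_step_def)
  then have "(fst p, snd p) \<in> ?S ^^ (m1 + m2)"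
    using relpow_trans[OF m1(2) relpow_swap_if_sym[OF _ m2(2)]] by blast
  then have "circuit_dist V R B d (fst p) (snd p) \<le> enat (m1 + m2)"
    using x unfolding is_vertex_def by (blast intro: circuit_dist_le_relpow)
  also have "\<dots> \<le> enat (2 * n)" using m1 m2 by simp
  finally show "circuit_dist V R B d (fst p) (snd p) \<le> enat (2 * n)" .
qed

section \<open>The fractional stable set polytope\<close>

lemma is_vertex_perturbation:
  assumes "is_vertex Q x" "(\<lambda>v. x v + e v) \<in> Q" "(\<lambda>v. x v - e v) \<in> Q"
  shows "e = (\<lambda>_. 0)"
proof -
  have extreme: "\<forall>y\<in>Q. \<forall>z\<in>Q. \<forall>t::real. 0 < t \<and> t < 1 \<and> x = (\<lambda>v. t * y v + (1 - t) * z v) \<longrightarrow> y = z"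
    using assms(1) unfolding is_vertex_def by blast
  have "0 < (1/2::real) \<and> 1/2 < (1::real) \<and>
      x = (\<lambda>v. 1/2 * (x v + e v) + (1 - 1/2) * (x v - e v))"
    by (auto simp: field_simps)
  then have "(\<lambda>v. x v + e v) = (\<lambda>v. x v - e v)"
    by (rule extreme[rule_format, OF assms(2,3)])
  then show ?thesis by (force simp: fun_eq_iff)
qed

lemma finite_pos_lower_bound:
  fixes T :: "real set"
  assumes "finite T" "\<And>t. t \<in> T \<Longrightarrow> 0 < t"
  obtains \<epsilon> where "0 < \<epsilon>" "\<And>t. t \<in> T \<Longrightarrow> \<epsilon> \<le> t"
proof (cases "T = {}")
  case True
  then show ?thesis using that[of 1] by simp
next
  case False
  then show ?thesis using that[of "Min T"] assms by simp
qed

definition half_integral :: "vec \<Rightarrow> bool" where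
  "half_integral x \<longleftrightarrow> (\<forall>v. x v = 0 \<or> x v = 1/2 \<or> x v = 1)"

definition zero_one :: "vec \<Rightarrow> bool" where
  "zero_one x \<longleftrightarrow> (\<forall>v. x v = 0 \<or> x v = 1)"

lemma zero_one_ne_half: "zero_one x \<Longrightarrow> x v \<noteq> 1/2"
  unfolding zero_one_def by (drule spec[of _ v]) auto

locale fstab_graph =
  fixes V :: "nat set" and E :: "nat set set"
  assumes graph: "graph V E"
    and connected: "connected_graph V E"
    and two_vertices: "2 \<le> card V"
begin

abbreviation P :: "vec set" where
  "P \<equiv> polyh V (fstab_rows V E) fstab_B fstab_d"

abbreviation rev_steps :: "(vec \<times> vec) set" where
  "rev_steps \<equiv> {(x, y). rev_circuit_step V (fstab_rows V E) fstab_B fstab_d x y}"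

lemma finite_V: "finite V"
  using graph unfolding graph_def by auto

lemma edge_ends:
  assumes "{a, b} \<in> E"
  shows "a \<in> V" "b \<in> V" "a \<noteq> b"
proof -
  have "{a, b} \<subseteq> V" "card {a, b} = 2" using assms graph unfolding graph_def by auto
  then show "a \<in> V" "b \<in> V" "a \<noteq> b" by (auto simp: card_insert_if split: if_splits)
qed

lemma edge_cases:
  assumes "e \<in> E"
  obtains a b where "e = {a, b}" "a \<noteq> b"
proof -
  have "card e = 2" using assms graph unfolding graph_def by auto
  then show ?thesis using that by (metis card_2_iff)
qed

lemma in_P_iff:
  "x \<in> P \<longleftrightarrow> supported_on V x \<and> (\<forall>v\<in>V. 0 \<le> x v) \<and> (\<forall>a b. {a, b} \<in> E \<longrightarrow> x a + x b \<le> 1)"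
proof -
  have "(\<forall>e\<in>E. sum x e \<le> 1) \<longleftrightarrow> (\<forall>a b. {a, b} \<in> E \<longrightarrow> x a + x b \<le> 1)"
  proof
    show "\<forall>a b. {a, b} \<in> E \<longrightarrow> x a + x b \<le> 1" if "\<forall>e\<in>E. sum x e \<le> 1"
      using that edge_ends(3) by fastforce
    show "\<forall>e\<in>E. sum x e \<le> 1" if "\<forall>a b. {a, b} \<in> E \<longrightarrow> x a + x b \<le> 1"
    proof
      fix e assume "e \<in> E"
      then obtain a b where "e = {a, b}" "a \<noteq> b" by (rule edge_cases)
      then show "sum x e \<le> 1" using that \<open>e \<in> E\<close> by simp
    qed
  qed
  moreover have "(\<forall>row\<in>fstab_rows V E. fstab_B row x \<le> fstab_d row) \<longleftrightarrow>
      (\<forall>e\<in>E. sum x e \<le> 1) \<and> (\<forall>v\<in>V. 0 \<le> x v)"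
    unfolding fstab_rows_def by (simp add: ball_Un)
  ultimately show ?thesis unfolding polyh_def by auto
qed

lemma P_nonneg: "x \<in> P \<Longrightarrow> v \<in> V \<Longrightarrow> 0 \<le> x v"
  and P_edge: "x \<in> P \<Longrightarrow> {a, b} \<in> E \<Longrightarrow> x a + x b \<le> 1"
  and P_outside: "x \<in> P \<Longrightarrow> v \<notin> V \<Longrightarrow> x v = 0"
  unfolding in_P_iff supported_on_def by auto

lemma has_neighbour:
  assumes "v \<in> V"
  obtains w where "{v, w} \<in> E"
proof -
  have "\<not> V \<subseteq> {v}"
    using two_vertices card_mono[of "{v}" V] by auto
  then obtain u where u: "u \<in> V" "u \<noteq> v" by blast
  have "(v, u) \<in> (adj E)\<^sup>*" using connected assms u unfolding connected_graph_def by auto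
  then obtain w where "(v, w) \<in> adj E" using u(2) by (cases rule: converse_rtranclE) auto
  then show ?thesis using that unfolding adj_def by auto
qed

lemma P_le_one:
  assumes "x \<in> P" "v \<in> V"
  shows "x v \<le> 1"
proof -
  obtain w where w: "{v, w} \<in> E" using has_neighbour[OF assms(2)] .
  then show ?thesis using P_edge[OF assms(1) w] P_nonneg[OF assms(1) edge_ends(2)[OF w]] by simp
qed

lemma vertex_perturbation_vanishes:
  assumes "is_vertex P x" "supported_on V e"
    and "\<And>v. v \<in> V \<Longrightarrow> \<bar>e v\<bar> \<le> x v"
    and "\<And>a b. {a, b} \<in> E \<Longrightarrow> \<bar>e a + e b\<bar> \<le> 1 - x a - x b"
  shows "e = (\<lambda>_. 0)"
proof (rule is_vertex_perturbation[OF assms(1)])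
  have "x \<in> P" using assms(1) unfolding is_vertex_def by blast
  then show "(\<lambda>v. x v + e v) \<in> P" "(\<lambda>v. x v - e v) \<in> P"
    using assms(2-4) unfolding in_P_iff supported_on_def by (force simp: abs_le_iff)+
qed

definition perturb_dir :: "real \<Rightarrow> real" where
  "perturb_dir p = (if 0 < p \<and> p < 1/2 then 1 else if 1/2 < p \<and> p < 1 then -1 else 0)"

lemma perturb_dir_complement:
  "0 \<le> p \<Longrightarrow> 0 \<le> q \<Longrightarrow> p + q = 1 \<Longrightarrow> perturb_dir p + perturb_dir q = 0"
  unfolding perturb_dir_def by auto

lemma perturb_dir_eq_0:
  "0 \<le> p \<Longrightarrow> p \<le> 1 \<Longrightarrow> perturb_dir p = 0 \<Longrightarrow> p = 0 \<or> p = 1/2 \<or> p = 1"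
  unfolding perturb_dir_def by (auto split: if_splits)

lemma P_slack:
  assumes xP: "x \<in> P"
  obtains \<epsilon> where "0 < \<epsilon>"
    and "\<And>v. v \<in> V \<Longrightarrow> 0 < x v \<Longrightarrow> \<epsilon> \<le> x v"
    and "\<And>a b. {a, b} \<in> E \<Longrightarrow> x a + x b < 1 \<Longrightarrow> 2 * \<epsilon> \<le> 1 - x a - x b"
proof -
  define T where "T = x ` {v\<in>V. 0 < x v} \<union>
    (\<lambda>(a, b). (1 - x a - x b) / 2) ` {(a, b) \<in> V \<times> V. {a, b} \<in> E \<and> x a + x b < 1}"
  have "finite {(a, b) \<in> V \<times> V. {a, b} \<in> E \<and> x a + x b < 1}"
    using finite_V by (auto intro: finite_subset[of _ "V \<times> V"])
  then have "finite T" unfolding T_def using finite_V by auto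
  moreover have "0 < t" if "t \<in> T" for t
    using that unfolding T_def by auto
  ultimately obtain \<epsilon> where \<epsilon>: "0 < \<epsilon>" "\<And>t. t \<in> T \<Longrightarrow> \<epsilon> \<le> t"
    using finite_pos_lower_bound by metis
  moreover have "\<epsilon> \<le> x v" if "v \<in> V" "0 < x v" for v
    using \<epsilon>(2) that unfolding T_def by auto
  moreover have "2 * \<epsilon> \<le> 1 - x a - x b" if ab: "{a, b} \<in> E" "x a + x b < 1" for a b
  proof -
    have "(1 - x a - x b) / 2 \<in> T"
      unfolding T_def using ab edge_ends[OF ab(1)] by (intro UnI2 image_eqI[of _ _ "(a, b)"]) auto
    then show ?thesis using \<epsilon>(2) by fastforce
  qed
  ultimately show ?thesis using that by blast
qed

lemma vertex_half_integral:
  assumes vx: "is_vertex P x"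
  shows "half_integral x"
proof -
  have xP: "x \<in> P" using vx unfolding is_vertex_def by blast
  obtain \<epsilon> where \<epsilon>: "0 < \<epsilon>" "\<And>v. v \<in> V \<Longrightarrow> 0 < x v \<Longrightarrow> \<epsilon> \<le> x v"
    "\<And>a b. {a, b} \<in> E \<Longrightarrow> x a + x b < 1 \<Longrightarrow> 2 * \<epsilon> \<le> 1 - x a - x b"
    using P_slack[OF xP] by blast
  define e where "e v = (if v \<in> V then \<epsilon> * perturb_dir (x v) else 0)" for v
  have e_bound: "\<bar>e v\<bar> \<le> \<epsilon>" for v
    using \<epsilon>(1) unfolding e_def perturb_dir_def by auto
  have "e = (\<lambda>_. 0)"
  proof (rule vertex_perturbation_vanishes[OF vx])
    show "supported_on V e" unfolding supported_on_def e_def by auto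
    show "\<bar>e v\<bar> \<le> x v" if "v \<in> V" for v
    proof (cases "perturb_dir (x v) = 0")
      case False
      then have "\<epsilon> \<le> x v" using \<epsilon>(2) that unfolding perturb_dir_def by (auto split: if_splits)
      then show ?thesis using e_bound[of v] by linarith
    qed (use that P_nonneg[OF xP] in \<open>auto simp: e_def\<close>)
    show "\<bar>e a + e b\<bar> \<le> 1 - x a - x b" if ab: "{a, b} \<in> E" for a b
    proof (cases "x a + x b < 1")
      case True
      then show ?thesis
        using \<epsilon>(3)[OF ab True] abs_triangle_ineq[of "e a" "e b"] e_bound[of a] e_bound[of b]
        by argo
    next
      case False
      then have "x a + x b = 1" using P_edge[OF xP ab] by linarith
      then have "perturb_dir (x a) + perturb_dir (x b) = 0"
        using perturb_dir_complement P_nonneg[OF xP] edge_ends[OF ab] by blast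
      then have "e a + e b = 0"
        using edge_ends[OF ab] unfolding e_def by (simp add: distrib_left[symmetric])
      then show ?thesis using \<open>x a + x b = 1\<close> by simp
    qed
  qed
  then have "perturb_dir (x v) = 0" if "v \<in> V" for v
    using \<epsilon>(1) that fun_cong[of e "\<lambda>_. 0" v] unfolding e_def by simp
  then show ?thesis
    using perturb_dir_eq_0 P_nonneg[OF xP] P_le_one[OF xP] P_outside[OF xP]
    unfolding half_integral_def by blast
qed

lemma vertex_zero_one_if_two_colourable:
  assumes colour: "\<And>a b. {a, b} \<in> E \<Longrightarrow> even (f a :: nat) \<noteq> even (f b)"
    and vx: "is_vertex P x"
  shows "zero_one x"
proof -
  have xP: "x \<in> P" using vx unfolding is_vertex_def by blast
  have hx: "x v = 0 \<or> x v = 1/2 \<or> x v = 1" for v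
    using vertex_half_integral[OF vx] unfolding half_integral_def by blast
  define e where "e v = (if x v = 1/2 then (if even (f v) then 1/2 else -1/2) else (0::real))" for v
  have e_abs: "\<bar>e v\<bar> = (if x v = 1/2 then 1/2 else 0)" for v unfolding e_def by simp
  have "e = (\<lambda>_. 0)"
  proof (rule vertex_perturbation_vanishes[OF vx])
    show "supported_on V e"
      using P_outside[OF xP] unfolding supported_on_def e_def by force
    show "\<bar>e v\<bar> \<le> x v" if "v \<in> V" for v
      using e_abs[of v] P_nonneg[OF xP that] by simp
    show "\<bar>e a + e b\<bar> \<le> 1 - x a - x b" if ab: "{a, b} \<in> E" for a b
    proof (cases "x a = 1/2 \<and> x b = 1/2")
      case True
      then have "e a + e b = 0" using colour[OF ab] unfolding e_def by auto
      then show ?thesis using True by simp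
    next
      case False
      then have "x a + x b \<le> 1/2 \<or> (x a \<noteq> 1/2 \<and> x b \<noteq> 1/2)"
        using hx[of a] hx[of b] P_edge[OF xP ab] by auto
      then show ?thesis
        using abs_triangle_ineq[of "e a" "e b"] e_abs[of a] e_abs[of b] P_edge[OF xP ab]
        by (auto split: if_splits)
    qed
  qed
  then have "x v \<noteq> 1/2" for v
    using fun_cong[of e "\<lambda>_. 0" v] unfolding e_def by (auto split: if_splits)
  then show ?thesis using hx unfolding zero_one_def by blast
qed

definition signed_tree :: "(nat \<Rightarrow> nat) \<Rightarrow> nat \<Rightarrow> vec \<Rightarrow> bool" where
  "signed_tree rk r \<sigma> \<longleftrightarrow> (\<forall>v. \<sigma> v \<in> {-1, 0, 1}) \<and> (\<forall>v. \<sigma> v \<noteq> 0 \<longrightarrow> v \<in> V) \<and> \<sigma> r \<noteq> 0 \<and>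
     (\<forall>v. \<sigma> v \<noteq> 0 \<and> v \<noteq> r \<longrightarrow> (\<exists>w. {w, v} \<in> E \<and> \<sigma> w = - \<sigma> v \<and> rk w < rk v))"

lemma signed_tree_uminus: "signed_tree rk r \<sigma> \<Longrightarrow> signed_tree rk r (\<lambda>v. - \<sigma> v)"
  unfolding signed_tree_def by force

lemma signed_tree_propagation:
  assumes \<sigma>: "signed_tree rk r \<sigma>"
    and zero: "\<And>v. \<sigma> v = 0 \<Longrightarrow> y v = 0"
    and cut: "\<And>a b. {a, b} \<in> E \<Longrightarrow> \<sigma> a = - \<sigma> b \<Longrightarrow> y a + y b = 0"
  shows "y = (\<lambda>v. (y r * \<sigma> r) * \<sigma> v)"
proof
  fix v
  have "y v * \<sigma> v = y r * \<sigma> r" if "\<sigma> v \<noteq> 0" for v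
    using that
  proof (induction "rk v" arbitrary: v rule: less_induct)
    case less
    show ?case
    proof (cases "v = r")
      case False
      then obtain w where w: "{w, v} \<in> E" "\<sigma> w = - \<sigma> v" "rk w < rk v"
        using \<sigma> less.prems unfolding signed_tree_def by blast
      then have "y w * \<sigma> w = y r * \<sigma> r" using less.hyps less.prems by force
      moreover have "y w = - y v" using cut[OF w(1,2)] by simp
      ultimately show ?thesis using w(2) by simp
    qed simp
  qed
  moreover have "\<sigma> v * \<sigma> v = 1" if "\<sigma> v \<noteq> 0"
  proof -
    have "\<sigma> v \<in> {-1, 0, 1}" using \<sigma> unfolding signed_tree_def by blast
    then show ?thesis using that by auto
  qed
  ultimately show "y v = y r * \<sigma> r * \<sigma> v"
    using zero[of v] by (cases "\<sigma> v = 0") (simp, metis mult.assoc mult.right_neutral)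
qed

lemma fstab_B_scale: "fstab_B row (\<lambda>v. c * g v) = c * fstab_B row g"
  by (cases row) (auto simp: sum_distrib_left)

lemma signed_tree_is_circuit:
  assumes \<sigma>: "signed_tree rk r \<sigma>"
  shows "is_circuit V (fstab_rows V E) fstab_B \<sigma>"
  unfolding is_circuit_def
proof (intro conjI allI impI)
  show "supported_on V \<sigma>" "\<sigma> \<noteq> (\<lambda>_. 0)"
    using \<sigma> unfolding signed_tree_def supported_on_def by (auto dest: fun_cong[of _ _ r])
  let ?supp = "suppB (fstab_rows V E) fstab_B"
  fix y assume y: "supported_on V y \<and> y \<noteq> (\<lambda>_. 0) \<and> ?supp y \<subseteq> ?supp \<sigma>"
  have "y v = 0" if "\<sigma> v = 0" for v
  proof (cases "v \<in> V")
    case True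
    then have "NonnegRow v \<notin> ?supp \<sigma>" using that unfolding suppB_def by simp
    then show ?thesis using y True unfolding suppB_def fstab_rows_def by auto
  qed (use y in \<open>auto simp: supported_on_def\<close>)
  moreover have "y a + y b = 0" if ab: "{a, b} \<in> E" "\<sigma> a = - \<sigma> b" for a b
  proof -
    have "EdgeRow {a, b} \<notin> ?supp \<sigma>" using ab edge_ends(3)[OF ab(1)] unfolding suppB_def by simp
    then show ?thesis
      using y ab(1) edge_ends(3)[OF ab(1)] unfolding suppB_def fstab_rows_def by auto
  qed
  ultimately have y_eq: "y = (\<lambda>v. (y r * \<sigma> r) * \<sigma> v)" by (rule signed_tree_propagation[OF \<sigma>])
  then have "y r * \<sigma> r \<noteq> 0" using y by force
  moreover have "fstab_B row y = (y r * \<sigma> r) * fstab_B row \<sigma>" for row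
    by (subst y_eq) (rule fstab_B_scale)
  ultimately show "?supp y = ?supp \<sigma>" by (simp add: suppB_def)
qed

lemma rev_steps_in_P: "(x, y) \<in> rev_steps \<Longrightarrow> x \<in> P \<and> y \<in> P"
  unfolding rev_circuit_step_def circuit_step_def by auto

lemma signed_tree_values:
  assumes "signed_tree rk r \<sigma>"
  shows "\<sigma> v = 0 \<or> \<sigma> v = 1 \<or> \<sigma> v = -1" and "\<sigma> v \<noteq> 0 \<Longrightarrow> v \<in> V"
  using assms unfolding signed_tree_def by auto

lemma shift_in_P:
  assumes x: "x \<in> P" and \<sigma>: "signed_tree rk r \<sigma>" and "0 < \<alpha>"
    and up_zero: "\<And>v. \<sigma> v = 1 \<Longrightarrow> x v = 0"
    and down_ge: "\<And>v. \<sigma> v = -1 \<Longrightarrow> \<alpha> \<le> x v"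
    and up_up: "\<And>a b. {a, b} \<in> E \<Longrightarrow> \<sigma> a = 1 \<Longrightarrow> \<sigma> b = 1 \<Longrightarrow> 2 * \<alpha> \<le> 1"
    and up_out: "\<And>a b. {a, b} \<in> E \<Longrightarrow> \<sigma> a = 1 \<Longrightarrow> \<sigma> b = 0 \<Longrightarrow> \<alpha> + x b \<le> 1"
  shows "(\<lambda>v. x v + \<alpha> * \<sigma> v) \<in> P"
  unfolding in_P_iff
proof (intro conjI ballI allI impI)
  show "supported_on V (\<lambda>v. x v + \<alpha> * \<sigma> v)"
    using x signed_tree_values(2)[OF \<sigma>] unfolding in_P_iff supported_on_def by force
  show "0 \<le> x v + \<alpha> * \<sigma> v" if "v \<in> V" for v
    using signed_tree_values(1)[OF \<sigma>, of v] up_zero[of v] down_ge[of v] P_nonneg[OF x that] \<open>0 < \<alpha>\<close>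
    by auto
  fix a b assume ab: "{a, b} \<in> E"
  have ba: "{b, a} \<in> E" using ab by (simp add: insert_commute)
  consider "\<sigma> a + \<sigma> b \<le> 0" | "\<sigma> a = 1" "\<sigma> b = 1" | "\<sigma> a = 1" "\<sigma> b = 0" | "\<sigma> a = 0" "\<sigma> b = 1"
    using signed_tree_values(1)[OF \<sigma>, of a] signed_tree_values(1)[OF \<sigma>, of b] by fastforce
  then show "x a + \<alpha> * \<sigma> a + (x b + \<alpha> * \<sigma> b) \<le> 1"
  proof cases
    case 1
    then have "\<alpha> * (\<sigma> a + \<sigma> b) \<le> 0" using \<open>0 < \<alpha>\<close> by (simp add: mult_nonneg_nonpos)
    then show ?thesis using P_edge[OF x ab] by (simp add: algebra_simps)
  qed (use up_zero up_up[OF ab] up_out[OF ab] up_out[OF ba] in auto)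
qed

lemma shift_blocked:
  assumes "(\<exists>v\<in>V. \<sigma> v < 0 \<and> x v + \<alpha> * \<sigma> v = 0) \<or>
      (\<exists>a b. {a, b} \<in> E \<and> 0 < \<sigma> a + \<sigma> b \<and> x a + x b + \<alpha> * (\<sigma> a + \<sigma> b) = 1)"
    and "\<alpha> < \<beta>"
  shows "(\<lambda>v. x v + \<beta> * \<sigma> v) \<notin> P"
proof
  assume shifted: "(\<lambda>v. x v + \<beta> * \<sigma> v) \<in> P"
  show False
    using assms(1)
  proof (elim disjE bexE exE conjE)
    fix v assume "v \<in> V" "\<sigma> v < 0" "x v + \<alpha> * \<sigma> v = 0"
    moreover have "\<beta> * \<sigma> v < \<alpha> * \<sigma> v" using \<open>\<sigma> v < 0\<close> \<open>\<alpha> < \<beta>\<close> by simp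
    ultimately show False using P_nonneg[OF shifted \<open>v \<in> V\<close>] by simp
  next
    fix a b assume "{a, b} \<in> E" "0 < \<sigma> a + \<sigma> b" "x a + x b + \<alpha> * (\<sigma> a + \<sigma> b) = 1"
    moreover have "\<alpha> * (\<sigma> a + \<sigma> b) < \<beta> * (\<sigma> a + \<sigma> b)"
      using \<open>0 < \<sigma> a + \<sigma> b\<close> \<open>\<alpha> < \<beta>\<close> by simp
    ultimately show False using P_edge[OF shifted \<open>{a, b} \<in> E\<close>] by (simp add: algebra_simps)
  qed
qed

lemma shift_circuit_step:
  assumes "x \<in> P" "(\<lambda>v. x v + \<alpha> * \<sigma> v) \<in> P" "signed_tree rk r \<sigma>" "0 < \<alpha>"
    and "(\<exists>v\<in>V. \<sigma> v < 0 \<and> x v + \<alpha> * \<sigma> v = 0) \<or>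
      (\<exists>a b. {a, b} \<in> E \<and> 0 < \<sigma> a + \<sigma> b \<and> x a + x b + \<alpha> * (\<sigma> a + \<sigma> b) = 1)"
  shows "circuit_step V (fstab_rows V E) fstab_B fstab_d x (\<lambda>v. x v + \<alpha> * \<sigma> v)"
proof -
  have "\<forall>\<beta>>\<alpha>. (\<lambda>v. x v + \<beta> * \<sigma> v) \<notin> P" using shift_blocked[OF assms(5)] by blast
  then show ?thesis
    unfolding circuit_step_def using assms(1,2,4) signed_tree_is_circuit[OF assms(3)]
    by (intro conjI exI[of _ \<sigma>] exI[of _ \<alpha>]) auto
qed

lemma shift_reverse_circuit_step:
  assumes x: "x \<in> P" and x': "(\<lambda>v. x v + \<alpha> * \<sigma> v) \<in> P"
    and \<sigma>: "signed_tree rk r \<sigma>" and "0 < \<alpha>"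
    and up_zero: "\<And>v. \<sigma> v = 1 \<Longrightarrow> x v = 0"
    and backward: "(\<exists>v. \<sigma> v = 1) \<or> (\<exists>a b. {a, b} \<in> E \<and> \<sigma> a + \<sigma> b < 0 \<and> x a + x b = 1)"
  shows "circuit_step V (fstab_rows V E) fstab_B fstab_d (\<lambda>v. x v + \<alpha> * \<sigma> v) x"
proof -
  define x' where "x' = (\<lambda>v. x v + \<alpha> * \<sigma> v)"
  have x_back: "(\<lambda>v. x' v + \<alpha> * - \<sigma> v) = x" unfolding x'_def by simp
  have "(\<exists>v\<in>V. - \<sigma> v < 0 \<and> x' v + \<alpha> * - \<sigma> v = 0) \<or>
      (\<exists>a b. {a, b} \<in> E \<and> 0 < - \<sigma> a + - \<sigma> b \<and> x' a + x' b + \<alpha> * (- \<sigma> a + - \<sigma> b) = 1)"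
  proof (rule disjE[OF backward])
    assume "\<exists>v. \<sigma> v = 1"
    then obtain v where "\<sigma> v = 1" by blast
    then show ?thesis
      using up_zero[of v] signed_tree_values(2)[OF \<sigma>, of v] unfolding x'_def by force
  next
    assume "\<exists>a b. {a, b} \<in> E \<and> \<sigma> a + \<sigma> b < 0 \<and> x a + x b = 1"
    then obtain a b where "{a, b} \<in> E" "\<sigma> a + \<sigma> b < 0" "x a + x b = 1" by blast
    then show ?thesis unfolding x'_def
      by (intro disjI2 exI[of _ a] exI[of _ b]) (simp add: algebra_simps)
  qed
  then have "circuit_step V (fstab_rows V E) fstab_B fstab_d x' (\<lambda>v. x' v + \<alpha> * - \<sigma> v)"
    using shift_circuit_step[OF x'[folded x'_def] _ signed_tree_uminus[OF \<sigma>] \<open>0 < \<alpha>\<close>] x x_back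
    by simp
  then have "circuit_step V (fstab_rows V E) fstab_B fstab_d x' x" by (simp only: x_back)
  then show ?thesis unfolding x'_def .
qed

lemma signed_tree_rev_step:
  assumes x: "x \<in> P" and \<sigma>: "signed_tree rk r \<sigma>" and "0 < \<alpha>"
    and up_zero: "\<And>v. \<sigma> v = 1 \<Longrightarrow> x v = 0"
    and down_ge: "\<And>v. \<sigma> v = -1 \<Longrightarrow> \<alpha> \<le> x v"
    and up_up: "\<And>a b. {a, b} \<in> E \<Longrightarrow> \<sigma> a = 1 \<Longrightarrow> \<sigma> b = 1 \<Longrightarrow> 2 * \<alpha> \<le> 1"
    and up_out: "\<And>a b. {a, b} \<in> E \<Longrightarrow> \<sigma> a = 1 \<Longrightarrow> \<sigma> b = 0 \<Longrightarrow> \<alpha> + x b \<le> 1"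
    and forward: "(\<exists>v. \<sigma> v = -1 \<and> x v = \<alpha>) \<or>
      (\<exists>a b. {a, b} \<in> E \<and> 0 < \<sigma> a + \<sigma> b \<and> x a + x b + \<alpha> * (\<sigma> a + \<sigma> b) = 1)"
    and backward: "(\<exists>v. \<sigma> v = 1) \<or> (\<exists>a b. {a, b} \<in> E \<and> \<sigma> a + \<sigma> b < 0 \<and> x a + x b = 1)"
  shows "(x, \<lambda>v. x v + \<alpha> * \<sigma> v) \<in> rev_steps"
proof -
  have x': "(\<lambda>v. x v + \<alpha> * \<sigma> v) \<in> P" by (rule shift_in_P) (use assms in auto)
  have "(\<exists>v\<in>V. \<sigma> v < 0 \<and> x v + \<alpha> * \<sigma> v = 0) \<or>
      (\<exists>a b. {a, b} \<in> E \<and> 0 < \<sigma> a + \<sigma> b \<and> x a + x b + \<alpha> * (\<sigma> a + \<sigma> b) = 1)"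
  proof (rule disjE[OF forward])
    assume "\<exists>v. \<sigma> v = -1 \<and> x v = \<alpha>"
    then obtain v where "\<sigma> v = -1" "x v = \<alpha>" by blast
    then show ?thesis using signed_tree_values(2)[OF \<sigma>, of v] by force
  qed simp
  then have "circuit_step V (fstab_rows V E) fstab_B fstab_d x (\<lambda>v. x v + \<alpha> * \<sigma> v)"
    by (rule shift_circuit_step[OF x x' \<sigma> \<open>0 < \<alpha>\<close>])
  moreover have "circuit_step V (fstab_rows V E) fstab_B fstab_d (\<lambda>v. x v + \<alpha> * \<sigma> v) x"
    by (rule shift_reverse_circuit_step[OF x x' \<sigma> \<open>0 < \<alpha>\<close> up_zero backward])
  ultimately show ?thesis by (simp add: rev_circuit_step_def)
qed

end

section \<open>Breadth-first layers\<close>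

locale rooted_fstab = fstab_graph +
  fixes r :: nat
  assumes root: "r \<in> V"
begin

definition layer :: "nat \<Rightarrow> nat" where
  "layer v = gdist E r v"

definition depth :: nat where
  "depth = ecc V E r"

lemma layer_path: "v \<in> V \<Longrightarrow> (r, v) \<in> adj E ^^ layer v"
proof -
  assume "v \<in> V"
  then have "(r, v) \<in> (adj E)\<^sup>*" using connected root unfolding connected_graph_def by auto
  then obtain n where "(r, v) \<in> adj E ^^ n" using rtrancl_power by blast
  then show ?thesis unfolding layer_def gdist_def by (rule LeastI)
qed

lemma layer_le: "(r, v) \<in> adj E ^^ n \<Longrightarrow> layer v \<le> n"
  unfolding layer_def gdist_def by (rule Least_le)

lemma layer_root: "layer r = 0"
  using layer_le[of r 0] by simp

lemma layer_eq_0: "v \<in> V \<Longrightarrow> layer v = 0 \<Longrightarrow> v = r"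
  using layer_path[of v] by auto

lemma layer_edge: "{a, b} \<in> E \<Longrightarrow> layer b \<le> layer a + 1"
proof -
  assume ab: "{a, b} \<in> E"
  have "(r, a) \<in> adj E ^^ layer a" using layer_path edge_ends(1)[OF ab] .
  moreover have "(a, b) \<in> adj E" using ab unfolding adj_def by simp
  ultimately have "(r, b) \<in> adj E ^^ Suc (layer a)" by (rule relpow_Suc_I)
  then show ?thesis using layer_le by fastforce
qed

lemma edge_same_parity:
  assumes "{a, b} \<in> E" "even (k + layer a) \<longleftrightarrow> even (k + layer b)"
  shows "layer a = layer b"
proof -
  have "layer b \<le> layer a + 1" "layer a \<le> layer b + 1"
    using layer_edge[OF assms(1)] layer_edge[of b a] assms(1) by (auto simp: insert_commute)
  then have "layer b = layer a \<or> layer b = Suc (layer a) \<or> layer a = Suc (layer b)" by linarith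
  then show ?thesis using assms(2) by auto
qed

lemma parent:
  assumes "v \<in> V" "v \<noteq> r"
  obtains w where "w \<in> V" "{w, v} \<in> E" "layer w + 1 = layer v"
proof -
  obtain m where m: "layer v = Suc m" using assms layer_eq_0 by (cases "layer v") auto
  then have "(r, v) \<in> adj E ^^ Suc m" using layer_path[OF assms(1)] by simp
  then obtain w where w: "(r, w) \<in> adj E ^^ m" "(w, v) \<in> adj E" by (rule relpow_Suc_E)
  then have e: "{w, v} \<in> E" unfolding adj_def by simp
  have "layer w + 1 = layer v" using layer_le[OF w(1)] layer_edge[OF e] m by simp
  then show ?thesis using that e edge_ends(1)[OF e] by blast
qed

lemma layer_le_depth: "v \<in> V \<Longrightarrow> layer v \<le> depth"
  unfolding depth_def ecc_def layer_def using finite_V by auto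

lemma depth_le_diam: "depth \<le> diam V E"
  unfolding depth_def diam_def using finite_V root by auto

lemma layer_nonempty:
  assumes "k \<le> depth"
  obtains v where "v \<in> V" "layer v = k"
proof -
  have "depth \<in> layer ` V"
    unfolding depth_def ecc_def layer_def using finite_V root by (intro Max_in) auto
  then obtain u where u: "u \<in> V" "layer u = depth" by auto
  have "\<exists>v\<in>V. layer v = k" if "u \<in> V" "k \<le> layer u" for u
    using that
  proof (induction "layer u - k" arbitrary: u)
    case (Suc n)
    then have "u \<noteq> r" using layer_root by auto
    then obtain w where "w \<in> V" "layer w + 1 = layer u" using parent Suc.prems(1) by metis
    then show ?case using Suc by (intro Suc.hyps(1)[of w]) auto
  qed force
  then obtain v where "v \<in> V" "layer v = k" using u assms by force
  then show ?thesis by (rule that)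
qed

lemma depth_pos: "1 \<le> depth"
proof -
  have "\<not> V \<subseteq> {r}" using two_vertices card_mono[of "{r}" V] by auto
  then obtain v where "v \<in> V" "v \<noteq> r" by blast
  then show ?thesis using layer_eq_0 layer_le_depth by fastforce
qed

definition alt_point :: "real \<Rightarrow> nat \<Rightarrow> vec" where
  "alt_point c k v = (if v \<in> V \<and> layer v \<le> k \<and> even (k + layer v) then c else 0)"

definition agrees_on_ball :: "real \<Rightarrow> nat \<Rightarrow> vec \<Rightarrow> bool" where
  "agrees_on_ball c k x \<longleftrightarrow> x \<in> P \<and> half_integral x \<and> (\<forall>v\<in>V. layer v \<le> k \<longrightarrow> x v = alt_point c k v)"

lemma agrees_on_ball_depth:
  assumes "agrees_on_ball c depth x"
  shows "x = alt_point c depth"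
proof
  fix v
  show "x v = alt_point c depth v"
  proof (cases "v \<in> V")
    case True
    then show ?thesis using assms layer_le_depth unfolding agrees_on_ball_def by blast
  next
    case False
    then show ?thesis using assms P_outside unfolding agrees_on_ball_def alt_point_def by auto
  qed
qed

lemma agrees_on_ball_0:
  "agrees_on_ball c 0 x \<longleftrightarrow> x \<in> P \<and> half_integral x \<and> x r = c"
  unfolding agrees_on_ball_def alt_point_def using root layer_eq_0 layer_root by auto

definition ball_signing :: "nat \<Rightarrow> nat set \<Rightarrow> nat set \<Rightarrow> vec" where
  "ball_signing k U Y v =
    (if v \<in> V \<and> layer v \<le> k then (if even (k + layer v) then -1 else 1)
     else if v \<in> U then 1 else if v \<in> Y then -1 else 0)"

lemma signed_tree_ball_signing:
  assumes U: "\<And>u. u \<in> U \<Longrightarrow> u \<in> V \<and> layer u = Suc k"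
    and Y: "\<And>y. y \<in> Y \<Longrightarrow> y \<in> V \<and> Suc k < layer y \<and> (\<exists>u\<in>U. {u, y} \<in> E)"
  shows "signed_tree layer r (ball_signing k U Y)"
proof -
  let ?\<sigma> = "ball_signing k U Y"
  have "\<exists>w. {w, v} \<in> E \<and> ?\<sigma> w = - ?\<sigma> v \<and> layer w < layer v"
    if v: "?\<sigma> v \<noteq> 0" "v \<noteq> r" for v
  proof -
    consider (ball) "v \<in> V" "layer v \<le> k" | (front) "v \<in> U"
      | (outer) "v \<in> Y" "v \<notin> U" "layer v > Suc k"
      using v(1) U Y unfolding ball_signing_def by (auto split: if_splits)
    then show ?thesis
    proof cases
      case ball
      obtain w where w: "w \<in> V" "{w, v} \<in> E" "layer w + 1 = layer v"
        using parent ball(1) v(2) by blast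
      have "layer v = Suc (layer w)" using w(3) by simp
      then have "even (k + layer w) \<longleftrightarrow> \<not> even (k + layer v)" by simp
      then show ?thesis using ball w unfolding ball_signing_def by (intro exI[of _ w]) auto
    next
      case front
      then obtain w where w: "w \<in> V" "{w, v} \<in> E" "layer w + 1 = layer v"
        using parent U v(2) by blast
      then show ?thesis using front U unfolding ball_signing_def by (intro exI[of _ w]) auto
    next
      case outer
      then obtain u where "u \<in> U" "{u, v} \<in> E" using Y by blast
      then show ?thesis using outer U unfolding ball_signing_def by (intro exI[of _ u]) force
    qed
  qed
  then show ?thesis
    using U Y root layer_root unfolding signed_tree_def ball_signing_def by (auto split: if_splits)
qed

lemma shrink_signing:
  fixes k :: nat
  defines "\<sigma> \<equiv> ball_signing (Suc k) {} {}"
  shows "\<sigma> v = 1 \<Longrightarrow> v \<in> V \<and> layer v \<le> k \<and> alt_point c (Suc k) v = 0 \<and> alt_point c k v = c"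
    and "\<sigma> v = -1 \<Longrightarrow> alt_point c (Suc k) v = c \<and> alt_point c k v = 0"
    and "\<sigma> v = 0 \<Longrightarrow> alt_point c (Suc k) v = 0 \<and> alt_point c k v = 0 \<and> \<not> (v \<in> V \<and> layer v \<le> Suc k)"
    and "{a, b} \<in> E \<Longrightarrow> \<sigma> a = 1 \<Longrightarrow> \<sigma> b \<noteq> 0"
proof -
  have parity: "layer v \<le> k \<and> even (k + layer v)"
    if "layer v \<le> Suc k" "\<not> even (Suc k + layer v)" for v
    using that by (cases "layer v = Suc k") auto
  show "\<sigma> v = 1 \<Longrightarrow> v \<in> V \<and> layer v \<le> k \<and> alt_point c (Suc k) v = 0 \<and> alt_point c k v = c"
    using parity[of v] unfolding \<sigma>_def ball_signing_def alt_point_def by (auto split: if_splits)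
  show "\<sigma> v = -1 \<Longrightarrow> alt_point c (Suc k) v = c \<and> alt_point c k v = 0"
    unfolding \<sigma>_def ball_signing_def alt_point_def by (auto split: if_splits)
  show "\<sigma> v = 0 \<Longrightarrow> alt_point c (Suc k) v = 0 \<and> alt_point c k v = 0 \<and> \<not> (v \<in> V \<and> layer v \<le> Suc k)"
    unfolding \<sigma>_def ball_signing_def alt_point_def by (auto split: if_splits)
  show "\<sigma> b \<noteq> 0" if "{a, b} \<in> E" "\<sigma> a = 1"
    using parity[of a] layer_edge[OF that(1)] edge_ends[OF that(1)] that(2)
    unfolding \<sigma>_def ball_signing_def by (auto split: if_splits)
qed

lemma shrink_signing_witnesses:
  assumes "Suc k \<le> depth"
  shows "\<exists>v. ball_signing (Suc k) {} {} v = -1 \<and> alt_point c (Suc k) v = c"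
    and "\<exists>v. ball_signing (Suc k) {} {} v = 1"
proof -
  obtain p where "p \<in> V" "layer p = Suc k" using layer_nonempty assms by blast
  then show "\<exists>v. ball_signing (Suc k) {} {} v = -1 \<and> alt_point c (Suc k) v = c"
    unfolding ball_signing_def alt_point_def by (intro exI[of _ p]) auto
  obtain q where "q \<in> V" "layer q = k" using layer_nonempty assms by (metis Suc_leD)
  then show "\<exists>v. ball_signing (Suc k) {} {} v = 1"
    unfolding ball_signing_def by (intro exI[of _ q]) auto
qed

lemma alt_point_shrink_rev_step:
  assumes big: "alt_point c (Suc k) \<in> P" and small: "alt_point c k \<in> P"
    and "0 < c" and k: "Suc k \<le> depth"
  shows "(alt_point c (Suc k), alt_point c k) \<in> rev_steps"
proof -
  let ?\<sigma> = "ball_signing (Suc k) {} {}"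
  have \<sigma>: "signed_tree layer r ?\<sigma>" by (rule signed_tree_ball_signing) auto
  have "(alt_point c (Suc k), \<lambda>v. alt_point c (Suc k) v + c * ?\<sigma> v) \<in> rev_steps"
  proof (rule signed_tree_rev_step[OF big \<sigma> \<open>0 < c\<close>])
    show "2 * c \<le> 1" if "{a, b} \<in> E" "?\<sigma> a = 1" "?\<sigma> b = 1" for a b
      using P_edge[OF small that(1)] shrink_signing(1)[OF that(2)] shrink_signing(1)[OF that(3)]
      by simp
    show "c + alt_point c (Suc k) b \<le> 1" if "{a, b} \<in> E" "?\<sigma> a = 1" "?\<sigma> b = 0" for a b
      using shrink_signing(4)[OF that(1,2)] that(3) by blast
  qed (use shrink_signing(1,2) shrink_signing_witnesses[OF k] in auto)
  moreover have "(\<lambda>v. alt_point c (Suc k) v + c * ?\<sigma> v) = alt_point c k"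
  proof
    fix v
    consider "?\<sigma> v = 1" | "?\<sigma> v = -1" | "?\<sigma> v = 0" using signed_tree_values(1)[OF \<sigma>] by blast
    then show "alt_point c (Suc k) v + c * ?\<sigma> v = alt_point c k v"
      by cases (use shrink_signing in auto)
  qed
  ultimately show ?thesis by simp
qed

lemma alt_point_one_half_rev_step:
  assumes big: "alt_point 1 (Suc k) \<in> P" and small: "alt_point 1 k \<notin> P" and k: "Suc k \<le> depth"
  obtains x' where "(alt_point 1 (Suc k), x') \<in> rev_steps" "agrees_on_ball (1/2) 0 x'"
proof -
  let ?\<sigma> = "ball_signing (Suc k) {} {}"
  have \<sigma>: "signed_tree layer r ?\<sigma>" by (rule signed_tree_ball_signing) auto
  have sign_cases: "?\<sigma> v = 1 \<or> ?\<sigma> v = -1 \<or> ?\<sigma> v = 0" for v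
    using signed_tree_values(1)[OF \<sigma>] by blast
  obtain a b where ab: "{a, b} \<in> E" "1 < alt_point 1 k a + alt_point 1 k b"
    using small unfolding in_P_iff supported_on_def alt_point_def by (auto split: if_splits)
  then have "alt_point 1 k a = 1" "alt_point 1 k b = 1"
    unfolding alt_point_def by (auto split: if_splits)
  then have up: "?\<sigma> a = 1" "?\<sigma> b = 1"
    using sign_cases[of a] sign_cases[of b] shrink_signing(2,3)[of k a 1] shrink_signing(2,3)[of k b 1]
    by auto
  have step: "(alt_point 1 (Suc k), \<lambda>v. alt_point 1 (Suc k) v + 1/2 * ?\<sigma> v) \<in> rev_steps"
  proof (rule signed_tree_rev_step[OF big \<sigma>])
    show "1/2 + alt_point 1 (Suc k) b \<le> 1" if "{a, b} \<in> E" "?\<sigma> a = 1" "?\<sigma> b = 0" for a b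
      using shrink_signing(4)[OF that(1,2)] that(3) by blast
    show "(\<exists>v. ?\<sigma> v = -1 \<and> alt_point 1 (Suc k) v = 1/2) \<or>
        (\<exists>a b. {a, b} \<in> E \<and> 0 < ?\<sigma> a + ?\<sigma> b \<and>
          alt_point 1 (Suc k) a + alt_point 1 (Suc k) b + 1/2 * (?\<sigma> a + ?\<sigma> b) = 1)"
      using ab(1) up shrink_signing(1)[of k a 1] shrink_signing(1)[of k b 1]
      by (intro disjI2 exI[of _ a] exI[of _ b]) auto
  qed (use shrink_signing(1,2) shrink_signing_witnesses[OF k] in auto)
  have shifted_values: "alt_point 1 (Suc k) v + 1/2 * ?\<sigma> v = (if ?\<sigma> v = 0 then 0 else 1/2)" for v
    using sign_cases[of v] shrink_signing(1,2,3)[of k v 1] by auto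
  have "?\<sigma> r \<noteq> 0" unfolding ball_signing_def using root layer_root by simp
  then have "agrees_on_ball (1/2) 0 (\<lambda>v. alt_point 1 (Suc k) v + 1/2 * ?\<sigma> v)"
    using rev_steps_in_P[OF step] shifted_values
    unfolding agrees_on_ball_0 half_integral_def by auto
  then show ?thesis using that step by blast
qed

definition intra_layer_edge :: bool where
  "intra_layer_edge \<longleftrightarrow> (\<exists>a b. {a, b} \<in> E \<and> layer a = layer b)"

definition front :: "nat \<Rightarrow> vec \<Rightarrow> nat set" where
  "front k x = {u \<in> V. layer u = Suc k \<and> x u = 0}"

definition blockers :: "nat \<Rightarrow> vec \<Rightarrow> nat set" where
  "blockers k x = {w \<in> V. Suc k < layer w \<and> 0 < x w \<and> (\<exists>u\<in>front k x. {u, w} \<in> E)}"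

text \<open>Shifting along \<open>advance_signing k x\<close> flips the pattern on the ball of radius \<open>k\<close>,
  raises the zeros of layer \<open>k + 1\<close> and lowers their positive neighbours further out,
  which would otherwise violate an edge constraint.\<close>

definition advance_signing :: "nat \<Rightarrow> vec \<Rightarrow> vec" where
  "advance_signing k x = ball_signing k (front k x) (blockers k x)"

context
  fixes c :: real and k :: nat and x :: vec
  assumes agrees: "agrees_on_ball c k x" and c: "c = 1/2 \<or> c = 1" and k: "k < depth"
begin

private abbreviation "\<sigma> \<equiv> advance_signing k x"

private lemma xP: "x \<in> P"
  using agrees unfolding agrees_on_ball_def by blast

private lemma x_values: "x v = 0 \<or> x v = 1/2 \<or> x v = 1"
  using agrees unfolding agrees_on_ball_def half_integral_def by blast

private lemma x_ball: "v \<in> V \<Longrightarrow> layer v \<le> k \<Longrightarrow> x v = (if even (k + layer v) then c else 0)"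
  using agrees unfolding agrees_on_ball_def alt_point_def by auto

lemma advance_signed_tree: "signed_tree layer r (advance_signing k x)"
  unfolding advance_signing_def
  by (rule signed_tree_ball_signing) (auto simp: front_def blockers_def)

lemma next_layer_le: "v \<in> V \<Longrightarrow> layer v = Suc k \<Longrightarrow> x v \<le> 1 - c"
proof -
  assume v: "v \<in> V" "layer v = Suc k"
  then obtain w where w: "w \<in> V" "{w, v} \<in> E" "layer w + 1 = layer v"
    using parent layer_root by (metis nat.distinct(1))
  then have "x w = c" using x_ball[OF w(1)] v(2) by simp
  then show ?thesis using P_edge[OF xP w(2)] by simp
qed

lemma advance_up: "\<sigma> v = 1 \<Longrightarrow> x v = 0 \<and> odd (k + layer v)"
  using x_ball[of v]
  unfolding advance_signing_def ball_signing_def front_def by (auto split: if_splits)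

lemma advance_down: "\<sigma> v = -1 \<Longrightarrow> x v = c \<or> v \<in> blockers k x"
  using x_ball[of v] unfolding advance_signing_def ball_signing_def by (auto split: if_splits)

lemma advance_down_ge: "\<sigma> v = -1 \<Longrightarrow> 1/2 \<le> x v"
  using advance_down[of v] c x_values[of v] unfolding blockers_def by auto

lemma advance_out:
  assumes ab: "{a, b} \<in> E" "\<sigma> a = 1" "\<sigma> b = 0"
  shows "x b \<le> 1 - c"
proof -
  have b_out: "\<not> layer b \<le> k" "b \<notin> front k x" "b \<notin> blockers k x"
    using ab(3) edge_ends(2)[OF ab(1)]
    unfolding advance_signing_def ball_signing_def by (auto split: if_splits)
  show ?thesis
  proof (cases "layer a \<le> k")
    case True
    then have "layer a < k" using ab(2) x_ball edge_ends(1)[OF ab(1)]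
      unfolding advance_signing_def ball_signing_def
      by (cases "layer a = k") (auto split: if_splits)
    then show ?thesis using layer_edge[OF ab(1)] b_out(1) by simp
  next
    case False
    then have a: "a \<in> front k x" using ab(2) edge_ends(1)[OF ab(1)]
      unfolding advance_signing_def ball_signing_def by (auto split: if_splits)
    then have "layer b \<le> Suc (Suc k)" using layer_edge[OF ab(1)] unfolding front_def by simp
    moreover have "x b \<le> 0" if "Suc k < layer b"
      using b_out(3) a ab(1) edge_ends(2)[OF ab(1)] that unfolding blockers_def by force
    moreover have "x b \<le> 1 - c" if "layer b = Suc k"
      using next_layer_le edge_ends(2)[OF ab(1)] that by blast
    ultimately show ?thesis using b_out(1) c by fastforce
  qed
qed

lemma advance_forward: "\<exists>p. \<sigma> p = -1 \<and> x p = c"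
proof -
  obtain p where "p \<in> V" "layer p = k" using layer_nonempty k by (metis less_imp_le)
  then show ?thesis
    using x_ball unfolding advance_signing_def ball_signing_def by (intro exI[of _ p]) auto
qed

lemma advance_backward: "(\<exists>v. \<sigma> v = 1) \<or> (\<exists>a b. {a, b} \<in> E \<and> \<sigma> a + \<sigma> b < 0 \<and> x a + x b = 1)"
proof (cases "k = 0 \<and> front k x = {}")
  case False
  then consider "0 < k" | u where "u \<in> front k x" by blast
  then show ?thesis
  proof cases
    case 1
    obtain q where "q \<in> V" "layer q = k - 1"
      using layer_nonempty k by (metis less_imp_diff_less less_imp_le)
    then have "\<sigma> q = 1" using 1 unfolding advance_signing_def ball_signing_def by simp
    then show ?thesis by blast
  next
    case 2
    then have "\<sigma> u = 1" unfolding advance_signing_def ball_signing_def front_def by simp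
    then show ?thesis by blast
  qed
next
  case True
  obtain b where b: "b \<in> V" "layer b = 1" using layer_nonempty depth_pos by blast
  then obtain w where w: "w \<in> V" "{w, b} \<in> E" "layer w + 1 = layer b"
    using parent layer_root by (metis zero_neq_one)
  have "w = r" using w b layer_eq_0 by simp
  have "x b \<noteq> 0" using b True unfolding front_def by auto
  then have "x b = 1 - c" using next_layer_le[OF b(1)] b(2) True c x_values[of b] by auto
  moreover have "x r = c" "\<sigma> r = -1"
    using x_ball[OF root] root layer_root True
    unfolding advance_signing_def ball_signing_def by auto
  moreover have "\<sigma> b = 0"
    using b True unfolding advance_signing_def ball_signing_def blockers_def by auto
  ultimately show ?thesis using w(2) \<open>w = r\<close> by (intro disjI2 exI[of _ r] exI[of _ b]) auto
qed

lemma advance_shift_on_ball: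
  assumes "v \<in> V" "layer v \<le> Suc k"
  shows "x v + c * \<sigma> v = alt_point c (Suc k) v"
proof (cases "layer v \<le> k")
  case True
  then show ?thesis using x_ball[OF assms(1) True]
    unfolding advance_signing_def ball_signing_def alt_point_def by (auto simp: assms)
next
  case False
  then have lv: "layer v = Suc k" using assms(2) by simp
  show ?thesis
  proof (cases "x v = 0")
    case True
    then show ?thesis using assms(1) lv
      unfolding advance_signing_def ball_signing_def alt_point_def front_def by auto
  next
    case False
    then have "x v = c" using next_layer_le[OF assms(1) lv] c x_values[of v] by auto
    moreover have "\<sigma> v = 0" using False lv
      unfolding advance_signing_def ball_signing_def front_def blockers_def by auto
    ultimately show ?thesis using assms(1) lv unfolding alt_point_def by auto
  qed
qed

lemma advance_rev_step:
  assumes down: "\<And>v. \<sigma> v = -1 \<Longrightarrow> c \<le> x v"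
    and up_up: "\<And>a b. {a, b} \<in> E \<Longrightarrow> \<sigma> a = 1 \<Longrightarrow> \<sigma> b = 1 \<Longrightarrow> 2 * c \<le> 1"
  shows "(x, \<lambda>v. x v + c * \<sigma> v) \<in> rev_steps"
    and "agrees_on_ball c (Suc k) (\<lambda>v. x v + c * \<sigma> v)"
proof -
  show step: "(x, \<lambda>v. x v + c * \<sigma> v) \<in> rev_steps"
  proof (rule signed_tree_rev_step[OF xP advance_signed_tree])
    show "c + x b \<le> 1" if "{a, b} \<in> E" "\<sigma> a = 1" "\<sigma> b = 0" for a b
      using advance_out[OF that] by simp
  qed (use c advance_up down up_up advance_forward advance_backward in auto)
  have sign: "\<sigma> v = 1 \<or> \<sigma> v = -1 \<or> \<sigma> v = 0" for v
    using signed_tree_values(1)[OF advance_signed_tree] by blast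
  have "x v + c * \<sigma> v = 0 \<or> x v + c * \<sigma> v = 1/2 \<or> x v + c * \<sigma> v = 1" for v
    using sign[of v]
  proof (elim disjE)
    assume "\<sigma> v = -1"
    then show ?thesis using down[of v] x_values[of v] c by auto
  qed (use advance_up[of v] c x_values[of v] in auto)
  then have "half_integral (\<lambda>v. x v + c * \<sigma> v)" unfolding half_integral_def by blast
  then show "agrees_on_ball c (Suc k) (\<lambda>v. x v + c * \<sigma> v)"
    using rev_steps_in_P[OF step] advance_shift_on_ball unfolding agrees_on_ball_def by blast
qed

lemma advance_one_step:
  assumes "c = 1"
    and ones: "\<And>v. \<sigma> v = -1 \<Longrightarrow> 1 \<le> x v"
    and no_up_up: "\<And>a b. {a, b} \<in> E \<Longrightarrow> \<sigma> a = 1 \<Longrightarrow> \<sigma> b \<noteq> 1"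
  shows "(x, \<lambda>v. x v + \<sigma> v) \<in> rev_steps"
    and "agrees_on_ball 1 (Suc k) (\<lambda>v. x v + \<sigma> v)"
    and "zero_one x \<Longrightarrow> zero_one (\<lambda>v. x v + \<sigma> v)"
proof -
  show "(x, \<lambda>v. x v + \<sigma> v) \<in> rev_steps" "agrees_on_ball 1 (Suc k) (\<lambda>v. x v + \<sigma> v)"
    using advance_rev_step ones no_up_up \<open>c = 1\<close> by auto
  show "zero_one (\<lambda>v. x v + \<sigma> v)" if "zero_one x"
    unfolding zero_one_def
  proof
    fix v
    have "x v = 0 \<or> x v = 1" using that unfolding zero_one_def by blast
    then show "x v + \<sigma> v = 0 \<or> x v + \<sigma> v = 1"
      using ones[of v] advance_up[of v] signed_tree_values(1)[OF advance_signed_tree, of v] by auto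
  qed
qed

lemma advance_half_rev_step:
  assumes "c = 1"
    and bad: "(\<exists>v. \<sigma> v = -1 \<and> x v < 1) \<or> (\<exists>a b. {a, b} \<in> E \<and> \<sigma> a = 1 \<and> \<sigma> b = 1)"
  shows "(x, \<lambda>v. x v + 1/2 * \<sigma> v) \<in> rev_steps"
    and "agrees_on_ball (1/2) 0 (\<lambda>v. x v + 1/2 * \<sigma> v)"
proof -
  show step: "(x, \<lambda>v. x v + 1/2 * \<sigma> v) \<in> rev_steps"
  proof (rule signed_tree_rev_step[OF xP advance_signed_tree])
    show "1/2 + x b \<le> 1" if "{a, b} \<in> E" "\<sigma> a = 1" "\<sigma> b = 0" for a b
      using advance_out[OF that] \<open>c = 1\<close> by simp
    show "(\<exists>v. \<sigma> v = -1 \<and> x v = 1/2) \<or>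
        (\<exists>a b. {a, b} \<in> E \<and> 0 < \<sigma> a + \<sigma> b \<and> x a + x b + 1/2 * (\<sigma> a + \<sigma> b) = 1)"
      using bad
    proof (elim disjE exE conjE)
      fix v assume "\<sigma> v = -1" "x v < 1"
      then show ?thesis using advance_down_ge[of v] x_values[of v] by auto
    next
      fix a b assume "{a, b} \<in> E" "\<sigma> a = 1" "\<sigma> b = 1"
      then show ?thesis using advance_up[of a] advance_up[of b]
        by (intro disjI2 exI[of _ a] exI[of _ b]) auto
    qed
  qed (use advance_up advance_down_ge advance_backward in auto)
  have sign: "\<sigma> v = 1 \<or> \<sigma> v = -1 \<or> \<sigma> v = 0" for v
    using signed_tree_values(1)[OF advance_signed_tree] by blast
  have "x v + 1/2 * \<sigma> v = 0 \<or> x v + 1/2 * \<sigma> v = 1/2 \<or> x v + 1/2 * \<sigma> v = 1" for v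
    using sign[of v] advance_up[of v] advance_down_ge[of v] x_values[of v] by auto
  moreover have "x r + 1/2 * \<sigma> r = 1/2"
    using x_ball[OF root] root layer_root \<open>c = 1\<close>
    unfolding advance_signing_def ball_signing_def by auto
  ultimately show "agrees_on_ball (1/2) 0 (\<lambda>v. x v + 1/2 * \<sigma> v)"
    using rev_steps_in_P[OF step] unfolding agrees_on_ball_0 half_integral_def by blast
qed

lemma advance_good_if_zero_one:
  assumes "c = 1" "zero_one x" "\<not> intra_layer_edge"
  shows "\<sigma> v = -1 \<Longrightarrow> 1 \<le> x v"
    and "{a, b} \<in> E \<Longrightarrow> \<sigma> a = 1 \<Longrightarrow> \<sigma> b \<noteq> 1"
proof -
  show "1 \<le> x v" if "\<sigma> v = -1"
  proof -
    have "x v = 0 \<or> x v = 1" using assms(2) unfolding zero_one_def by blast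
    then show ?thesis using advance_down_ge[OF that] by auto
  qed
  show "\<sigma> b \<noteq> 1" if "{a, b} \<in> E" "\<sigma> a = 1"
  proof
    assume "\<sigma> b = 1"
    then have "layer a = layer b"
      using advance_up[of a] advance_up[of b] that edge_same_parity[OF that(1), of k] by simp
    then show False using assms(3) that(1) unfolding intra_layer_edge_def by blast
  qed
qed

end

definition root_signing :: "vec \<Rightarrow> vec" where
  "root_signing x v = (if v = r then 1 else if {r, v} \<in> E \<and> 0 < x v then -1 else 0)"

lemma signed_tree_root_signing: "signed_tree layer r (root_signing x)"
proof -
  have "layer r < layer v" if "{r, v} \<in> E" for v
    using that edge_ends[OF that] layer_eq_0 layer_root by fastforce
  then show ?thesis
    using root edge_ends unfolding signed_tree_def root_signing_def by auto
qed

context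
  fixes x :: vec
  assumes x_in_P: "x \<in> P" and hx: "half_integral x" and x0: "x r = 0"
begin

private abbreviation "\<tau> \<equiv> root_signing x"

private lemma root_x_values: "x v = 0 \<or> x v = 1/2 \<or> x v = 1"
  using hx unfolding half_integral_def by blast

private lemma root_up: "\<tau> v = 1 \<longleftrightarrow> v = r"
  unfolding root_signing_def by simp

private lemma root_down: "\<tau> v = -1 \<Longrightarrow> 1/2 \<le> x v"
  using root_x_values[of v] unfolding root_signing_def by (auto split: if_splits)

private lemma root_out:
  assumes "{r, b} \<in> E" "\<tau> b = 0"
  shows "x b = 0"
proof -
  have "\<not> 0 < x b" using assms edge_ends(3)[OF assms(1)] unfolding root_signing_def by auto
  then show ?thesis using P_nonneg[OF x_in_P edge_ends(2)[OF assms(1)]] by simp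
qed

lemma root_full_step:
  assumes ones: "\<And>v. \<tau> v = -1 \<Longrightarrow> x v = 1"
  shows "(x, \<lambda>v. x v + 1 * \<tau> v) \<in> rev_steps"
    and "agrees_on_ball 1 0 (\<lambda>v. x v + 1 * \<tau> v)"
    and "zero_one x \<Longrightarrow> zero_one (\<lambda>v. x v + 1 * \<tau> v)"
proof -
  obtain b where b: "{r, b} \<in> E" using has_neighbour root by blast
  show step: "(x, \<lambda>v. x v + 1 * \<tau> v) \<in> rev_steps"
  proof (rule signed_tree_rev_step[OF x_in_P signed_tree_root_signing])
    show "1 + x b \<le> 1" if "{a, b} \<in> E" "\<tau> a = 1" "\<tau> b = 0" for a b
      using root_out[of b] that root_up by simp
    show "2 * 1 \<le> (1::real)" if "{a, b} \<in> E" "\<tau> a = 1" "\<tau> b = 1" for a b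
      using that root_up[of a] root_up[of b] edge_ends(3)[of a b] by simp
    show "(\<exists>v. \<tau> v = -1 \<and> x v = 1) \<or>
        (\<exists>a b. {a, b} \<in> E \<and> 0 < \<tau> a + \<tau> b \<and> x a + x b + 1 * (\<tau> a + \<tau> b) = 1)"
    proof (cases "\<tau> b = -1")
      case False
      then have "\<tau> b = 0" using b edge_ends(3)[OF b] unfolding root_signing_def by auto
      then show ?thesis using b root_out[OF b] x0 root_up[of r]
        by (intro disjI2 exI[of _ r] exI[of _ b]) auto
    qed (use ones in blast)
  qed (use ones root_up x0 in auto)
  have shifted: "x v + 1 * \<tau> v = (if \<tau> v = 0 then x v else if v = r then 1 else 0)" for v
    using ones root_up x0 signed_tree_values(1)[OF signed_tree_root_signing, of x v] by auto
  show "agrees_on_ball 1 0 (\<lambda>v. x v + 1 * \<tau> v)"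
    unfolding agrees_on_ball_0 half_integral_def
    using rev_steps_in_P[OF step] shifted root_x_values root_up[of r] x0 by auto
  show "zero_one (\<lambda>v. x v + 1 * \<tau> v)" if "zero_one x"
    using that shifted unfolding zero_one_def by auto
qed

lemma root_half_step:
  assumes v: "\<tau> v = -1" "x v \<noteq> 1"
  shows "(x, \<lambda>v. x v + 1/2 * \<tau> v) \<in> rev_steps"
    and "agrees_on_ball (1/2) 0 (\<lambda>v. x v + 1/2 * \<tau> v)"
    and "\<not> zero_one x"
proof -
  have "x v = 1/2" using v root_down[of v] root_x_values[of v] by auto
  then show "\<not> zero_one x" using zero_one_ne_half by blast
  show step: "(x, \<lambda>v. x v + 1/2 * \<tau> v) \<in> rev_steps"
  proof (rule signed_tree_rev_step[OF x_in_P signed_tree_root_signing])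
    show "1/2 + x b \<le> 1" if "{a, b} \<in> E" "\<tau> a = 1" "\<tau> b = 0" for a b
      using root_out[of b] that root_up by simp
  qed (use v \<open>x v = 1/2\<close> root_up x0 root_down in auto)
  have "x u + 1/2 * \<tau> u = 0 \<or> x u + 1/2 * \<tau> u = 1/2 \<or> x u + 1/2 * \<tau> u = 1" for u
    using root_x_values[of u] root_up[of u] root_down[of u] x0
      signed_tree_values(1)[OF signed_tree_root_signing, of x u] by auto
  then show "agrees_on_ball (1/2) 0 (\<lambda>v. x v + 1/2 * \<tau> v)"
    unfolding agrees_on_ball_0 half_integral_def using rev_steps_in_P[OF step] x0 root_up[of r]
    by auto
qed

end

definition reaches_within :: "vec \<Rightarrow> vec \<Rightarrow> nat \<Rightarrow> bool" where
  "reaches_within x y n \<longleftrightarrow> (\<exists>m\<le>n. (x, y) \<in> rev_steps ^^ m)"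

lemma reaches_within_refl: "reaches_within x x n"
  unfolding reaches_within_def by (intro exI[of _ 0]) simp

lemma reaches_within_mono: "reaches_within x y m \<Longrightarrow> m \<le> n \<Longrightarrow> reaches_within x y n"
  unfolding reaches_within_def by (meson order_trans)

lemma reaches_within_step:
  "(x, x') \<in> rev_steps \<Longrightarrow> reaches_within x' y n \<Longrightarrow> reaches_within x y (Suc n)"
  unfolding reaches_within_def by (meson Suc_le_mono relpow_Suc_I2)

text \<open>Without edges inside layers all vertices are 0/1 and the walks stay at \<open>c = 1\<close>;
  otherwise they are all routed to \<open>c = 1/2\<close>.\<close>

definition hub :: vec where
  "hub = alt_point (if intra_layer_edge then 1/2 else 1) depth"

lemma agrees_half_reaches_depth:
  "agrees_on_ball (1/2) k x \<Longrightarrow> k \<le> depth \<Longrightarrow>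
    reaches_within x (alt_point (1/2) depth) (depth - k)"
proof (induction "depth - k" arbitrary: k x)
  case 0
  then show ?case using agrees_on_ball_depth reaches_within_refl by simp
next
  case (Suc n)
  let ?\<sigma> = "advance_signing k x"
  have k: "k < depth" using Suc.hyps(2) by simp
  let ?x' = "\<lambda>v. x v + 1/2 * ?\<sigma> v"
  have "(x, ?x') \<in> rev_steps" "agrees_on_ball (1/2) (Suc k) ?x'"
    using advance_rev_step[OF Suc.prems(1) _ k] advance_down_ge[OF Suc.prems(1) _ k] by auto
  moreover have "n = depth - Suc k" "depth - k = Suc (depth - Suc k)" using Suc.hyps(2) by auto
  ultimately show ?case using Suc.hyps(1) k reaches_within_step by simp
qed

lemma alt_point_one_reaches_half:
  "alt_point 1 k \<in> P \<Longrightarrow> alt_point 1 j \<notin> P \<Longrightarrow> j \<le> k \<Longrightarrow> k \<le> depth \<Longrightarrow>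
    reaches_within (alt_point 1 k) (alt_point (1/2) depth) (k + depth)"
proof (induction k)
  case (Suc k)
  show ?case
  proof (cases "alt_point 1 k \<in> P")
    case True
    then have "reaches_within (alt_point 1 k) (alt_point (1/2) depth) (k + depth)"
      using Suc by (metis Suc_leD le_SucE)
    then show ?thesis using alt_point_shrink_rev_step[OF Suc.prems(1) True _ Suc.prems(4)]
      by (simp add: reaches_within_step)
  next
    case False
    obtain x' where "(alt_point 1 (Suc k), x') \<in> rev_steps" "agrees_on_ball (1/2) 0 x'"
      using alt_point_one_half_rev_step[OF Suc.prems(1) False Suc.prems(4)] .
    then have "reaches_within (alt_point 1 (Suc k)) (alt_point (1/2) depth) (Suc depth)"
      using agrees_half_reaches_depth reaches_within_step by fastforce
    then show ?thesis using reaches_within_mono by fastforce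
  qed
qed simp

lemma alt_point_one_depth_reaches_hub:
  assumes "alt_point 1 depth \<in> P"
  shows "reaches_within (alt_point 1 depth) hub (2 * depth)"
proof (cases intra_layer_edge)
  case True
  then obtain a b where ab: "{a, b} \<in> E" "layer a = layer b" unfolding intra_layer_edge_def by blast
  then have "alt_point 1 (layer a) \<notin> P"
    using P_edge[of "alt_point 1 (layer a)" a b] edge_ends[OF ab(1)] unfolding alt_point_def by auto
  then have "reaches_within (alt_point 1 depth) (alt_point (1/2) depth) (depth + depth)"
    using alt_point_one_reaches_half[OF assms] layer_le_depth edge_ends(1)[OF ab(1)] by blast
  then show ?thesis using True unfolding hub_def by (simp add: mult_2)
qed (simp add: hub_def reaches_within_refl)

lemma agrees_one_reaches_hub:
  "agrees_on_ball 1 k x \<Longrightarrow> k \<le> depth \<Longrightarrow> (\<not> intra_layer_edge \<Longrightarrow> zero_one x) \<Longrightarrow>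
    reaches_within x hub (3 * depth - k)"
proof (induction "depth - k" arbitrary: k x)
  case 0
  then have "x = alt_point 1 depth" using agrees_on_ball_depth by simp
  then show ?case
    using alt_point_one_depth_reaches_hub 0 reaches_within_mono
    unfolding agrees_on_ball_def by fastforce
next
  case (Suc n)
  let ?\<sigma> = "advance_signing k x"
  have k: "k < depth" using Suc.hyps(2) by simp
  show ?case
  proof (cases "(\<forall>v. ?\<sigma> v = -1 \<longrightarrow> 1 \<le> x v) \<and>
      (\<forall>a b. {a, b} \<in> E \<longrightarrow> ?\<sigma> a = 1 \<longrightarrow> ?\<sigma> b \<noteq> 1)")
    case True
    let ?x' = "\<lambda>v. x v + ?\<sigma> v"
    have "(x, ?x') \<in> rev_steps" "agrees_on_ball 1 (Suc k) ?x'"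
      and "\<not> intra_layer_edge \<Longrightarrow> zero_one ?x'"
      using advance_one_step[OF Suc.prems(1) _ k] True Suc.prems(3) by auto
    moreover have "n = depth - Suc k" "3 * depth - k = Suc (3 * depth - Suc k)"
      using Suc.hyps(2) by auto
    ultimately show ?thesis using Suc.hyps(1) k reaches_within_step by simp
  next
    case False
    then have "intra_layer_edge"
      using advance_good_if_zero_one[OF Suc.prems(1) _ k] Suc.prems(3) by auto
    let ?x' = "\<lambda>v. x v + 1/2 * ?\<sigma> v"
    have "(x, ?x') \<in> rev_steps" "agrees_on_ball (1/2) 0 ?x'"
      using advance_half_rev_step[OF Suc.prems(1) _ k] False by (auto simp: not_le)
    then have "reaches_within x (alt_point (1/2) depth) (Suc depth)"
      using agrees_half_reaches_depth reaches_within_step by fastforce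
    moreover have "Suc depth \<le> 3 * depth - k" using k by simp
    ultimately show ?thesis
      using \<open>intra_layer_edge\<close> reaches_within_mono unfolding hub_def by simp
  qed
qed

lemma admissible_reaches_hub:
  assumes xP: "x \<in> P" and hx: "half_integral x"
    and bip: "\<not> intra_layer_edge \<Longrightarrow> zero_one x"
  shows "reaches_within x hub (3 * depth + 1)"
proof -
  consider "x r = 1/2" | "x r = 1" | "x r = 0" using hx unfolding half_integral_def by blast
  then show ?thesis
  proof cases
    case 1
    then have "intra_layer_edge" using bip zero_one_ne_half by blast
    then show ?thesis
      using agrees_half_reaches_depth[of 0 x] 1 xP hx reaches_within_mono unfolding agrees_on_ball_0 hub_def
      by fastforce
  next
    case 2
    then show ?thesis
      using agrees_one_reaches_hub[of 0 x] xP hx bip reaches_within_mono unfolding agrees_on_ball_0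
      by fastforce
  next
    case 3
    let ?\<sigma> = "root_signing x"
    show ?thesis
    proof (cases "\<forall>v. ?\<sigma> v = -1 \<longrightarrow> x v = 1")
      case True
      let ?x' = "\<lambda>v. x v + 1 * ?\<sigma> v"
      have "(x, ?x') \<in> rev_steps" "agrees_on_ball 1 0 ?x'" "zero_one x \<Longrightarrow> zero_one ?x'"
        using root_full_step[OF xP hx 3] True by auto
      then show ?thesis using agrees_one_reaches_hub[of 0 ?x'] bip reaches_within_step by fastforce
    next
      case False
      then obtain v where v: "?\<sigma> v = -1" "x v \<noteq> 1" by blast
      let ?x' = "\<lambda>v. x v + 1/2 * ?\<sigma> v"
      have "(x, ?x') \<in> rev_steps" "agrees_on_ball (1/2) 0 ?x'" "intra_layer_edge"
        using root_half_step[OF xP hx 3 v] bip by auto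
      then show ?thesis
        using agrees_half_reaches_depth[of 0 ?x'] reaches_within_step reaches_within_mono unfolding hub_def
        by fastforce
    qed
  qed
qed

lemma vertex_reaches_hub:
  assumes "is_vertex P x"
  shows "reaches_within x hub (3 * depth + 1)"
proof (rule admissible_reaches_hub)
  show "x \<in> P" using assms unfolding is_vertex_def by blast
  show "half_integral x" using vertex_half_integral[OF assms] .
  show "zero_one x" if "\<not> intra_layer_edge"
  proof (rule vertex_zero_one_if_two_colourable[OF _ assms])
    show "even (layer a) \<noteq> even (layer b)" if "{a, b} \<in> E" for a b
      using edge_same_parity[OF that, of 0] \<open>\<not> intra_layer_edge\<close> that
      unfolding intra_layer_edge_def by auto
  qed
qed

lemma circuit_diameter_le_depth:
  "circuit_diameter V (fstab_rows V E) fstab_B fstab_d \<le> enat (8 * depth)"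
proof -
  have "circuit_diameter V (fstab_rows V E) fstab_B fstab_d \<le> enat (2 * (3 * depth + 1))"
    using vertex_reaches_hub unfolding reaches_within_def
    by (intro circuit_diameter_le_via_hub) blast
  also have "\<dots> \<le> enat (8 * depth)" using depth_pos by simp
  finally show ?thesis .
qed

end

theorem corollary3:
  shows "\<exists>C::nat. \<forall>V E. graph V E \<and> connected_graph V E \<and> card V \<ge> 2 \<longrightarrow>
           CD_FSTAB V E \<le> enat (C * diam V E)"
proof (intro exI[of _ 8] allI impI)
  fix V E assume G: "graph V E \<and> connected_graph V E \<and> card V \<ge> 2"
  then obtain r where "r \<in> V" by fastforce
  then interpret rooted_fstab V E r using G by unfold_locales auto
  have "CD_FSTAB V E \<le> enat (8 * depth)"
    unfolding CD_FSTAB_def by (rule circuit_diameter_le_depth)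
  also have "\<dots> \<le> enat (8 * diam V E)" using depth_le_diam by simp
  finally show "CD_FSTAB V E \<le> enat (8 * diam V E)" .
qed

end
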